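(* Let $\mu_1,\dots,\mu_d$ be Borel probability measures on $\mathbb{R}^d$ such that there exist $p_1,\dots,p_d\in(1,+\infty)$ with $\sum_i\frac1{p_i}=1$ and $\sum_i\int\frac{|x|^{p_i}}{p_i}d\mu_i(x)<+\infty$. Assume that two of the marginals are symmetric, i.e. $(-\mathrm{id})\sharp\mu_i=\mu_i$ and $(-\mathrm{id})\sharp\mu_j=\mu_j$ for two distinct indices $i\ne j$. Let $\bar\gamma$ be any maximizer of $\int\det(x_1,\dots,x_d)\,d\gamma$ over $\gamma\in\Pi(\mu_1,\dots,\mu_d)$. Then $\det(x_1,\dots,x_d)\ge0$ for $\bar\gamma$-a.e. $(x_1,\dots,x_d)$, and $\bar\gamma$ also maximizes $\int|\det(x_1,\dots,x_d)|\,d\gamma$ over $\gamma\in\Pi(\mu_1,\dots,\mu_d)$.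
   Context: $\Pi(\mu_1,\dots,\mu_d)$ is the set of Borel probability measures on $(\mathbb{R}^d)^d$ whose $i$-th marginal is $\mu_i$ for each $i$; $\sharp$ denotes push-forward. *)

theory Defs
  imports "HOL-Probability.Probability"
begin

text \<open>A point of (R^d)^d is a d-tuple (x_1,...,x_d) of vectors in R^d, represented as
  an element of type real^'n^'n whose i-th component x $ i is x_i. The value
  det(x_1,...,x_d) is then the determinant of this matrix (rows x_i; equal to the
  determinant with columns x_i).\<close>

definition couplings :: "('n::finite \<Rightarrow> (real^'n) measure) \<Rightarrow> (real^'n^'n) measure set" where
  "couplings \<mu> = {\<gamma>. prob_space \<gamma> \<and> sets \<gamma> = sets borel \<and>
      (\<forall>i. distr \<gamma> borel (\<lambda>x. x $ i) = \<mu> i)}"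

end

theory Submission
  imports Defs
begin

text \<open>Negating one row of x negates det x. Starting from any coupling \<gamma>, toss an independent
  fair coin b, negate row i when b differs from [det x \<ge> 0] and negate row j when b is false.
  For every x each of the two rows is then negated with probability 1/2, so by the symmetry of
  \<mu>_i and \<mu>_j the marginals are unchanged; and an odd number of rows is negated exactly when
  det x < 0, so the new coupling carries |det x|. Hence
  \<integral>|det| d\<gamma> \<le> \<integral>det d\<gamma>bar \<le> \<integral>|det| d\<gamma>bar for every coupling \<gamma>, and for \<gamma> = \<gamma>bar the equality
  forces det \<ge> 0 almost everywhere. Integrability of det under every coupling comes from
  |det x| \<le> d! \<Prod>|x_k| \<le> d! \<Sum>|x_k|^p_k / p_k (Young's inequality) and the moment condition.\<close>

lemma borel_measurable_vec_nth [measurable]: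
  "(\<lambda>x::'a::real_normed_vector^'m::finite. x $ k) \<in> borel_measurable borel"
  by (intro borel_measurable_continuous_onI continuous_intros)

lemma borel_measurable_det [measurable]: "(det :: real^'n::finite^'n \<Rightarrow> real) \<in> borel_measurable borel"
  unfolding det_def by measurable

definition negate_row :: "'m::finite \<Rightarrow> 'a::ab_group_add^'n^'m \<Rightarrow> 'a^'n^'m" where
  "negate_row k x = (\<chi> l. if l = k then - x $ l else x $ l)"

lemma borel_measurable_negate_row [measurable]:
  "(negate_row k :: real^'n::finite^'m::finite \<Rightarrow> _) \<in> borel_measurable borel"
  unfolding negate_row_def
proof (intro borel_measurable_continuous_onI continuous_intros)
  show "continuous_on UNIV (\<lambda>x::real^'n^'m. if l = k then - x $ l else x $ l)" for l
    by (cases "l = k"; simp; intro continuous_intros)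
qed

lemma det_negate_row: "det (negate_row k x) = - det (x :: 'a::comm_ring_1^'n::finite^'n)"
proof -
  have "negate_row k x = (\<chi> l. if l = k then (-1) *s x $ l else x $ l)"
    by (simp add: negate_row_def vec_eq_iff)
  then show ?thesis
    using det_row_mul[of k "-1" "\<lambda>l. x $ l" "\<lambda>l. x $ l"] by simp
qed

lemma Youngs_inequality_prod:
  fixes a p :: "'i \<Rightarrow> real"
  assumes "finite S"
    and a: "\<And>k. k \<in> S \<Longrightarrow> a k \<ge> 0"
    and p: "\<And>k. k \<in> S \<Longrightarrow> p k > 0"
    and p_sum: "(\<Sum>k\<in>S. 1 / p k) = 1"
  shows "(\<Prod>k\<in>S. a k) \<le> (\<Sum>k\<in>S. a k powr p k / p k)"
proof (cases "\<exists>k\<in>S. a k = 0")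
  case True
  then have "(\<Prod>k\<in>S. a k) = 0"
    using \<open>finite S\<close> by simp
  moreover have "(\<Sum>k\<in>S. a k powr p k / p k) \<ge> 0"
    using p by (intro sum_nonneg) (simp add: less_imp_le)
  ultimately show ?thesis by linarith
next
  case False
  with a have a_pos: "\<And>k. k \<in> S \<Longrightarrow> a k > 0" and a_nz: "\<And>k. k \<in> S \<Longrightarrow> a k \<noteq> 0"
    by force+
  have "(\<Sum>k\<in>S. (1 / p k) * ln (a k powr p k)) \<le> ln (\<Sum>k\<in>S. (1 / p k) *\<^sub>R (a k powr p k))"
    using p p_sum by (intro concave_on_sum[OF \<open>finite S\<close> _ ln_concave p_sum]) (auto simp: less_imp_le a_nz)
  moreover have "(\<Sum>k\<in>S. (1 / p k) * ln (a k powr p k)) = (\<Sum>k\<in>S. ln (a k))"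
    using p by (intro sum.cong) (simp_all add: ln_powr a_nz dual_order.strict_implies_not_eq)
  moreover have "(\<Sum>k\<in>S. ln (a k)) = ln (\<Prod>k\<in>S. a k)"
    by (rule ln_prod[OF \<open>finite S\<close> a_nz, symmetric])
  moreover have "(\<Prod>k\<in>S. a k) > 0"
    using a_pos by (simp add: prod_pos)
  moreover have "(\<Sum>k\<in>S. a k powr p k / p k) > 0"
    using p p_sum \<open>finite S\<close> by (intro sum_pos) (auto simp: a_nz)
  ultimately show ?thesis
    by simp
qed

lemma abs_det_le_prod_norm_rows:
  fixes x :: "real^'n::finite^'n"
  shows "\<bar>det x\<bar> \<le> fact CARD('n) * (\<Prod>k\<in>UNIV. norm (x $ k))"
proof -
  have "\<bar>det x\<bar> \<le> (\<Sum>q | q permutes (UNIV::'n set). \<bar>of_int (sign q) * (\<Prod>k\<in>UNIV. x $ k $ q k)\<bar>)"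
    unfolding det_def by (rule sum_abs)
  also have "\<dots> \<le> (\<Sum>q | q permutes (UNIV::'n set). \<Prod>k\<in>UNIV. norm (x $ k))"
  proof (rule sum_mono)
    fix q
    have "\<bar>of_int (sign q) * (\<Prod>k\<in>UNIV. x $ k $ q k)\<bar> = (\<Prod>k\<in>UNIV. \<bar>x $ k $ q k\<bar>)"
      by (simp add: abs_mult sign_def abs_prod)
    also have "\<dots> \<le> (\<Prod>k\<in>UNIV. norm (x $ k))"
      by (intro prod_mono) (auto simp: component_le_norm_cart)
    finally show "\<bar>of_int (sign q) * (\<Prod>k\<in>UNIV. x $ k $ q k)\<bar> \<le> (\<Prod>k\<in>UNIV. norm (x $ k))" .
  qed
  finally show ?thesis
    by (simp add: card_permutations)
qed

lemma nn_integral_coupling_row: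
  fixes f :: "real^'n::finite \<Rightarrow> ennreal"
  assumes "\<gamma> \<in> couplings \<mu>" and [measurable]: "f \<in> borel_measurable borel"
  shows "(\<integral>\<^sup>+ x. f (x $ k) \<partial>\<gamma>) = (\<integral>\<^sup>+ y. f y \<partial>\<mu> k)"
proof -
  have [measurable_cong]: "sets \<gamma> = sets borel" and marginal: "distr \<gamma> borel (\<lambda>x. x $ k) = \<mu> k"
    using assms(1) by (auto simp: couplings_def)
  have "(\<integral>\<^sup>+ x. f (x $ k) \<partial>\<gamma>) = (\<integral>\<^sup>+ y. f y \<partial>distr \<gamma> borel (\<lambda>x. x $ k))"
    by (rule nn_integral_distr[symmetric]) measurable
  then show ?thesis
    by (simp add: marginal)
qed

lemma integrable_det_coupling:
  fixes \<mu> :: "'n::finite \<Rightarrow> (real^'n) measure" and p :: "'n \<Rightarrow> real"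
  assumes p_pos: "\<And>k. p k > 0"
    and p_sum: "(\<Sum>k\<in>UNIV. 1 / p k) = 1"
    and moments: "(\<Sum>k\<in>UNIV. \<integral>\<^sup>+ x. ennreal (norm x powr p k / p k) \<partial>\<mu> k) < \<infinity>"
    and \<gamma>: "\<gamma> \<in> couplings \<mu>"
  shows "integrable \<gamma> det"
proof -
  have [measurable_cong]: "sets \<gamma> = sets borel"
    using \<gamma> by (simp add: couplings_def)
  define G where "G k y = norm (y::real^'n) powr p k / p k" for k y
  have G_nonneg: "G k y \<ge> 0" for k y
    using p_pos[of k] by (simp add: G_def)
  have [measurable]: "G k \<in> borel_measurable borel" for k
    unfolding G_def by measurable
  have det_bound: "ennreal (norm (det x)) \<le> ennreal (fact CARD('n)) * (\<Sum>k\<in>UNIV. ennreal (G k (x $ k)))"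
    for x
  proof -
    have "\<bar>det x\<bar> \<le> fact CARD('n) * (\<Prod>k\<in>UNIV. norm (x $ k))"
      by (rule abs_det_le_prod_norm_rows)
    also have "\<dots> \<le> fact CARD('n) * (\<Sum>k\<in>UNIV. G k (x $ k))"
      unfolding G_def by (intro mult_left_mono Youngs_inequality_prod p_pos p_sum) auto
    finally have "ennreal (norm (det x)) \<le> ennreal (fact CARD('n) * (\<Sum>k\<in>UNIV. G k (x $ k)))"
      by (simp add: ennreal_leI)
    also have "\<dots> = ennreal (fact CARD('n)) * (\<Sum>k\<in>UNIV. ennreal (G k (x $ k)))"
      using G_nonneg by (simp add: ennreal_mult sum_nonneg sum_ennreal)
    finally show ?thesis .
  qed
  have row_moments: "(\<integral>\<^sup>+ x. ennreal (G k (x $ k)) \<partial>\<gamma>) = (\<integral>\<^sup>+ y. ennreal (G k y) \<partial>\<mu> k)" for k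
    by (rule nn_integral_coupling_row[OF \<gamma>]) measurable
  have "(\<integral>\<^sup>+ x. ennreal (norm (det x)) \<partial>\<gamma>)
      \<le> (\<integral>\<^sup>+ x. ennreal (fact CARD('n)) * (\<Sum>k\<in>UNIV. ennreal (G k (x $ k))) \<partial>\<gamma>)"
    by (intro nn_integral_mono det_bound)
  also have "\<dots> = ennreal (fact CARD('n)) * (\<Sum>k\<in>UNIV. \<integral>\<^sup>+ x. ennreal (G k (x $ k)) \<partial>\<gamma>)"
    by (simp add: nn_integral_cmult nn_integral_sum)
  also have "\<dots> = ennreal (fact CARD('n)) * (\<Sum>k\<in>UNIV. \<integral>\<^sup>+ y. ennreal (G k y) \<partial>\<mu> k)"
    using row_moments by simp
  also have "\<dots> < \<infinity>"
    using moments by (simp add: G_def ennreal_mult_less_top)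
  finally show ?thesis
    by (intro integrableI_bounded) auto
qed

lemma AE_nonneg_of_integral_abs_le:
  fixes f :: "'a \<Rightarrow> real"
  assumes f: "integrable M f" and le: "(\<integral>x. \<bar>f x\<bar> \<partial>M) \<le> (\<integral>x. f x \<partial>M)"
  shows "AE x in M. f x \<ge> 0"
proof -
  have "(\<integral>x. \<bar>f x\<bar> - f x \<partial>M) = (\<integral>x. \<bar>f x\<bar> \<partial>M) - (\<integral>x. f x \<partial>M)"
    using f by (intro Bochner_Integration.integral_diff) auto
  also have "\<dots> = 0"
    using le integral_mono[OF f integrable_abs[OF f] abs_ge_self] by linarith
  finally have "AE x in M. \<bar>f x\<bar> - f x = 0"
    using f by (subst integral_nonneg_eq_0_iff_AE[symmetric]) auto
  then show ?thesis
    by eventually_elim auto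
qed

definition fair_coin :: "bool measure" where
  "fair_coin = measure_pmf (bernoulli_pmf (1/2))"

lemma prob_space_fair_coin: "prob_space fair_coin"
  unfolding fair_coin_def by (rule prob_space_measure_pmf)

lemma nn_integral_fair_coin: "(\<integral>\<^sup>+ b. f b \<partial>fair_coin) = ennreal (1/2) * (f True + f False)"
  unfolding fair_coin_def
  by (subst nn_integral_measure_pmf_finite) (auto simp: UNIV_bool algebra_simps)

definition sign_flip :: "'n::finite \<Rightarrow> 'n \<Rightarrow> (real^'n^'n) \<times> bool \<Rightarrow> real^'n^'n" where
  "sign_flip i j = (\<lambda>(x, b). let y = (if b then x else negate_row j x)
     in if b = (det x \<ge> 0) then y else negate_row i y)"

lemma det_sign_flip: "det (sign_flip i j \<omega>) = \<bar>det (fst \<omega>)\<bar>"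
  by (cases \<omega>) (auto simp: sign_flip_def Let_def det_negate_row)

lemma measurable_sign_flip:
  assumes "sets \<gamma> = sets borel"
  shows "sign_flip i j \<in> \<gamma> \<Otimes>\<^sub>M fair_coin \<rightarrow>\<^sub>M borel"
  using assms[measurable_cong] unfolding sign_flip_def fair_coin_def Let_def by measurable

lemma row_sign_flip:
  assumes "i \<noteq> j"
  shows "sign_flip i j (x, b) $ k =
    (if k = i \<and> b \<noteq> (det x \<ge> 0) \<or> k = j \<and> \<not> b then - x $ k else x $ k)"
  using assms by (auto simp: sign_flip_def Let_def negate_row_def)

definition flip_coupling :: "'n::finite \<Rightarrow> 'n \<Rightarrow> (real^'n^'n) measure \<Rightarrow> (real^'n^'n) measure" where
  "flip_coupling i j \<gamma> = distr (\<gamma> \<Otimes>\<^sub>M fair_coin) borel (sign_flip i j)"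

lemma nn_integral_flip_coupling:
  fixes f :: "real^'n::finite^'n \<Rightarrow> ennreal"
  assumes \<gamma>: "sets \<gamma> = sets borel" and [measurable]: "f \<in> borel_measurable borel"
  shows "(\<integral>\<^sup>+ y. f y \<partial>flip_coupling i j \<gamma>) =
    (\<integral>\<^sup>+ x. ennreal (1/2) * (f (sign_flip i j (x, True)) + f (sign_flip i j (x, False))) \<partial>\<gamma>)"
proof -
  note [measurable] = measurable_sign_flip[OF \<gamma>]
  have "(\<integral>\<^sup>+ y. f y \<partial>flip_coupling i j \<gamma>) = (\<integral>\<^sup>+ \<omega>. f (sign_flip i j \<omega>) \<partial>(\<gamma> \<Otimes>\<^sub>M fair_coin))"
    unfolding flip_coupling_def by (rule nn_integral_distr) measurable
  also have "\<dots> = (\<integral>\<^sup>+ x. \<integral>\<^sup>+ b. f (sign_flip i j (x, b)) \<partial>fair_coin \<partial>\<gamma>)"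
    by (rule sigma_finite_measure.nn_integral_fst[symmetric])
      (simp_all add: prob_space_fair_coin prob_space_imp_sigma_finite)
  finally show ?thesis
    by (simp add: nn_integral_fair_coin)
qed

lemma integral_det_flip_coupling:
  assumes \<gamma>: "sets \<gamma> = sets borel"
  shows "(\<integral>y. det y \<partial>flip_coupling i j \<gamma>) = (\<integral>x. \<bar>det x\<bar> \<partial>\<gamma>)"
proof -
  note [measurable] = measurable_sign_flip[OF \<gamma>]
  note \<gamma>[measurable_cong]
  have "(\<integral>y. det y \<partial>flip_coupling i j \<gamma>) = (\<integral>\<omega>. \<bar>det (fst \<omega>)\<bar> \<partial>(\<gamma> \<Otimes>\<^sub>M fair_coin))"
    unfolding flip_coupling_def by (subst integral_distr) (simp_all add: det_sign_flip)
  also have "\<dots> = (\<integral>x. \<bar>det x\<bar> \<partial>distr (\<gamma> \<Otimes>\<^sub>M fair_coin) \<gamma> fst)"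
    by (rule integral_distr[symmetric]) measurable
  also have "distr (\<gamma> \<Otimes>\<^sub>M fair_coin) \<gamma> fst = \<gamma>"
    by (rule prob_space.distr_pair_fst[OF prob_space_fair_coin])
  finally show ?thesis .
qed

lemma nn_integral_uminus_invariant:
  fixes f :: "'a::euclidean_space \<Rightarrow> ennreal"
  assumes \<nu>: "sets \<nu> = sets borel" and sym: "distr \<nu> borel uminus = \<nu>"
    and [measurable]: "f \<in> borel_measurable borel"
  shows "(\<integral>\<^sup>+ z. f (- z) \<partial>\<nu>) = (\<integral>\<^sup>+ z. f z \<partial>\<nu>)"
proof -
  note \<nu>[measurable_cong]
  have "(\<integral>\<^sup>+ z. f (- z) \<partial>\<nu>) = (\<integral>\<^sup>+ z. f z \<partial>distr \<nu> borel uminus)"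
    by (rule nn_integral_distr[of uminus \<nu> borel f, symmetric]) measurable
  then show ?thesis
    by (simp add: sym)
qed

lemma nn_integral_row_flip_coupling:
  fixes \<mu> :: "'n::finite \<Rightarrow> (real^'n) measure" and f :: "real^'n \<Rightarrow> ennreal"
  assumes \<gamma>: "\<gamma> \<in> couplings \<mu>" and ij: "i \<noteq> j"
    and borel: "\<And>k. sets (\<mu> k) = sets borel"
    and sym_i: "distr (\<mu> i) borel uminus = \<mu> i"
    and sym_j: "distr (\<mu> j) borel uminus = \<mu> j"
    and [measurable]: "f \<in> borel_measurable borel"
  shows "(\<integral>\<^sup>+ y. f (y $ k) \<partial>flip_coupling i j \<gamma>) = (\<integral>\<^sup>+ z. f z \<partial>\<mu> k)"
proof -
  have \<gamma>_borel [measurable_cong]: "sets \<gamma> = sets borel"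
    using \<gamma> by (simp add: couplings_def)
  define h :: "real^'n \<Rightarrow> real^'n" where "h = (if k = i \<or> k = j then uminus else id)"
  have [measurable]: "h \<in> borel_measurable borel"
    by (simp add: h_def)
  have h_invariant: "(\<integral>\<^sup>+ z. f (h z) \<partial>\<mu> k) = (\<integral>\<^sup>+ z. f z \<partial>\<mu> k)"
    using nn_integral_uminus_invariant[OF borel sym_i] nn_integral_uminus_invariant[OF borel sym_j]
    by (auto simp: h_def)
  have half_ennreal: "ennreal (1/2) + ennreal (1/2) = 1"
    by (subst ennreal_plus[symmetric]) auto
  have "(\<integral>\<^sup>+ y. f (y $ k) \<partial>flip_coupling i j \<gamma>) = (\<integral>\<^sup>+ x. ennreal (1/2) *
      (f (sign_flip i j (x, True) $ k) + f (sign_flip i j (x, False) $ k)) \<partial>\<gamma>)"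
    by (rule nn_integral_flip_coupling[OF \<gamma>_borel]) measurable
  also have "\<dots> = (\<integral>\<^sup>+ x. ennreal (1/2) * (f (x $ k) + f (h (x $ k))) \<partial>\<gamma>)"
    using ij by (intro nn_integral_cong) (auto simp: row_sign_flip h_def add.commute)
  also have "\<dots> = ennreal (1/2) * ((\<integral>\<^sup>+ x. f (x $ k) \<partial>\<gamma>) + (\<integral>\<^sup>+ x. f (h (x $ k)) \<partial>\<gamma>))"
    by (simp add: nn_integral_cmult nn_integral_add)
  also have "\<dots> = ennreal (1/2) * ((\<integral>\<^sup>+ z. f z \<partial>\<mu> k) + (\<integral>\<^sup>+ z. f z \<partial>\<mu> k))"
    using nn_integral_coupling_row[OF \<gamma>, of "\<lambda>z. f (h z)" k] h_invariant
    by (simp add: nn_integral_coupling_row[OF \<gamma>])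
  also have "\<dots> = (\<integral>\<^sup>+ z. f z \<partial>\<mu> k)"
    by (metis half_ennreal distrib_left distrib_right mult_1)
  finally show ?thesis .
qed

lemma flip_coupling_in_couplings:
  fixes \<mu> :: "'n::finite \<Rightarrow> (real^'n) measure"
  assumes \<gamma>: "\<gamma> \<in> couplings \<mu>" and ij: "i \<noteq> j"
    and borel: "\<And>k. sets (\<mu> k) = sets borel"
    and sym_i: "distr (\<mu> i) borel uminus = \<mu> i"
    and sym_j: "distr (\<mu> j) borel uminus = \<mu> j"
  shows "flip_coupling i j \<gamma> \<in> couplings \<mu>"
proof -
  have "prob_space \<gamma>" and \<gamma>_borel: "sets \<gamma> = sets borel"
    using \<gamma> by (auto simp: couplings_def)
  then have "prob_space (flip_coupling i j \<gamma>)"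
    unfolding flip_coupling_def
    by (intro prob_space.prob_space_distr prob_space_pair prob_space_fair_coin measurable_sign_flip)
  moreover have "distr (flip_coupling i j \<gamma>) borel (\<lambda>y. y $ k) = \<mu> k" for k
  proof (rule measure_eqI)
    show "sets (distr (flip_coupling i j \<gamma>) borel (\<lambda>y. y $ k)) = sets (\<mu> k)"
      by (simp add: borel)
    fix A assume "A \<in> sets (distr (flip_coupling i j \<gamma>) borel (\<lambda>y. y $ k))"
    then have [measurable]: "A \<in> sets borel"
      by simp
    have [measurable_cong]: "sets (flip_coupling i j \<gamma>) = sets borel"
      by (simp add: flip_coupling_def)
    have "emeasure (distr (flip_coupling i j \<gamma>) borel (\<lambda>y. y $ k)) A =
        (\<integral>\<^sup>+ z. indicator A z \<partial>distr (flip_coupling i j \<gamma>) borel (\<lambda>y. y $ k))"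
      by simp
    also have "\<dots> = (\<integral>\<^sup>+ y. indicator A (y $ k) \<partial>flip_coupling i j \<gamma>)"
      by (rule nn_integral_distr) measurable
    also have "\<dots> = emeasure (\<mu> k) A"
      using borel[of k] by (simp add: nn_integral_row_flip_coupling[OF \<gamma> ij borel sym_i sym_j])
    finally show "emeasure (distr (flip_coupling i j \<gamma>) borel (\<lambda>y. y $ k)) A = emeasure (\<mu> k) A" .
  qed
  ultimately show ?thesis
    by (simp add: couplings_def flip_coupling_def)
qed

theorem proposition5p1:
  fixes \<mu> :: "'n::finite \<Rightarrow> (real^'n) measure"
    and p :: "'n \<Rightarrow> real"
    and \<gamma>bar :: "(real^'n^'n) measure"
  assumes prob: "\<And>k. prob_space (\<mu> k)"
    and borel: "\<And>k. sets (\<mu> k) = sets borel"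
    and p_gt: "\<And>k. p k > 1"
    and p_sum: "(\<Sum>k\<in>UNIV. 1 / p k) = 1"
    and moments: "(\<Sum>k\<in>UNIV. \<integral>\<^sup>+ x. ennreal (norm x powr p k / p k) \<partial>\<mu> k) < \<infinity>"
    and ij: "i \<noteq> j"
    and sym_i: "distr (\<mu> i) borel uminus = \<mu> i"
    and sym_j: "distr (\<mu> j) borel uminus = \<mu> j"
    and in_pi: "\<gamma>bar \<in> couplings \<mu>"
    and maxim: "\<And>\<gamma>. \<gamma> \<in> couplings \<mu> \<Longrightarrow> (\<integral>x. det x \<partial>\<gamma>) \<le> (\<integral>x. det x \<partial>\<gamma>bar)"
  shows "(AE x in \<gamma>bar. det x \<ge> 0) \<and>
         (\<forall>\<gamma>\<in>couplings \<mu>. (\<integral>x. \<bar>det x\<bar> \<partial>\<gamma>) \<le> (\<integral>x. \<bar>det x\<bar> \<partial>\<gamma>bar))"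
proof -
  have abs_le_max: "(\<integral>x. \<bar>det x\<bar> \<partial>\<gamma>) \<le> (\<integral>x. det x \<partial>\<gamma>bar)" if \<gamma>: "\<gamma> \<in> couplings \<mu>" for \<gamma>
  proof -
    have "(\<integral>x. \<bar>det x\<bar> \<partial>\<gamma>) = (\<integral>y. det y \<partial>flip_coupling i j \<gamma>)"
      using \<gamma> by (simp add: integral_det_flip_coupling couplings_def)
    also have "\<dots> \<le> (\<integral>x. det x \<partial>\<gamma>bar)"
      by (intro maxim flip_coupling_in_couplings[OF \<gamma> ij borel sym_i sym_j])
    finally show ?thesis .
  qed
  have integrable: "integrable \<gamma>bar det"
    using p_gt by (intro integrable_det_coupling[OF _ p_sum moments in_pi]) (auto intro: less_trans[of 0 1])
  then have "(\<integral>x. det x \<partial>\<gamma>bar) \<le> (\<integral>x. \<bar>det x\<bar> \<partial>\<gamma>bar)"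
    by (intro integral_mono) auto
  with abs_le_max show ?thesis
    using AE_nonneg_of_integral_abs_le[OF integrable abs_le_max[OF in_pi]] by fastforce
qed

end
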